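(* Let $n\ge 1$ and let $b_1,\ldots,b_{2^n}\in\{0,1\}$ be such that the cyclic sequence $[b_1,\ldots,b_{2^n}]$ is a binary De Bruijn cycle of order $n$ (its $2^n$ cyclic windows of length $n$ are all distinct). For a seed $(z_1,z_2)\in\{0,1\}^2$ define $z_i=b_{i-2}+z_{i-1}+z_{i-2}\pmod 2$ for $i=3,\ldots,2^n+2$, and let $\mathcal{D}(z_1z_2)=z_{2^n+1}z_{2^n+2}$. Then $\mathcal{D}$ is a permutation of $\{00,01,10,11\}$ with exactly one fixed point $z_1z_2$, given by $$z_1=a_0+\delta_{\tilde n,0}\,a_1+\delta_{\tilde n,1}\,a_2,\qquad z_2=a_1+\delta_{\tilde n,0}\,a_2+\delta_{\tilde n,1}\,a_0\pmod 2,$$ where $\tilde n=n\bmod 2$, $\delta$ is the Kronecker delta, and $a_j=\sum_i b_{3i+j}\bmod 2$ for $j=0,1,2$, the sum running over all integers $i$ with $1\le 3i+j\le 2^n$. Consequently, the preimage of this De Bruijn cycle under the homomorphism $B_{n+2}\to B_n$ induced by $d(x_1,x_2,x_3)=x_1+x_2+x_3$ consists of exactly two vertex-disjoint cycles in $B_{n+2}$: one of length $2^n$ (started at the fixed seed) and one of length $3\cdot 2^n$ (formed by the other three seeds).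
   Context: $B_m$ denotes the binary De Bruijn digraph with vertex set $\{0,1\}^m$ and an edge from $(x_1,\ldots,x_m)$ to $(y_1,\ldots,y_m)$ iff $y_i=x_{i+1}$ for $i<m$. The homomorphism induced by $d$ sends $(x_1,\ldots,x_{n+2})$ to $(d(x_1,x_2,x_3),\ldots,d(x_n,x_{n+1},x_{n+2}))$. The sequence $z_1,\ldots,z_{2^n+2}$ is the preimage path of the cycle started from the seed $z_1z_2$, i.e. $d(z_j,z_{j+1},z_{j+2})=b_j$ for $j=1,\ldots,2^n$. *)

theory Defs
  imports Main
begin

definition dB_vert :: "nat \<Rightarrow> nat list set" where
  "dB_vert m = {x. length x = m \<and> set x \<subseteq> {0, 1}}"

text \<open>Edge x -> y of B_m: y_i = x_(i+1) for i < m.\<close>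
definition dB_edge :: "nat list \<Rightarrow> nat list \<Rightarrow> bool" where
  "dB_edge x y \<longleftrightarrow> length x = length y \<and> tl x = butlast y"

definition hom_d :: "nat list \<Rightarrow> nat list" where
  "hom_d x = map (\<lambda>i. (x ! i + x ! (i + 1) + x ! (i + 2)) mod 2) [0..<length x - 2]"

text \<open>The k-th cyclic window of length n of the cyclic sequence b_1..b_(2^n)
  (0-based start k, so window 0 is b_1..b_n).\<close>
definition window :: "nat \<Rightarrow> (nat \<Rightarrow> nat) \<Rightarrow> nat \<Rightarrow> nat list" where
  "window n b k = map (\<lambda>t. b (((k + t) mod 2 ^ n) + 1)) [0..<n]"

definition is_dB_cycle :: "nat \<Rightarrow> (nat \<Rightarrow> nat) \<Rightarrow> bool" where
  "is_dB_cycle n b \<longleftrightarrow> (\<forall>i\<in>{1..2 ^ n}. b i \<in> {0, 1}) \<and> inj_on (window n b) {0..<2 ^ n}"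

definition cyc_edges :: "nat \<Rightarrow> (nat \<Rightarrow> nat) \<Rightarrow> (nat list \<times> nat list) set" where
  "cyc_edges n b = {(window n b k, window n b (Suc k)) | k. k < 2 ^ n}"

text \<open>zpair b s k = (z_(k+1), z_(k+2)) where (z_1,z_2) = s and
  z_i = b_(i-2) + z_(i-1) + z_(i-2) mod 2.\<close>
fun zpair :: "(nat \<Rightarrow> nat) \<Rightarrow> nat \<times> nat \<Rightarrow> nat \<Rightarrow> nat \<times> nat" where
  "zpair b s 0 = s"
| "zpair b s (Suc k) = (case zpair b s k of (x, y) \<Rightarrow> (y, (b (k + 1) + y + x) mod 2))"

text \<open>z_i for i >= 1.\<close>
definition zval :: "(nat \<Rightarrow> nat) \<Rightarrow> nat \<times> nat \<Rightarrow> nat \<Rightarrow> nat" where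
  "zval b s i = fst (zpair b s (i - 1))"

definition Dmap :: "nat \<Rightarrow> (nat \<Rightarrow> nat) \<Rightarrow> nat \<times> nat \<Rightarrow> nat \<times> nat" where
  "Dmap n b s = zpair b s (2 ^ n)"

definition seeds :: "(nat \<times> nat) set" where
  "seeds = {0, 1} \<times> {0, 1}"

definition kdelta :: "nat \<Rightarrow> nat \<Rightarrow> nat" where
  "kdelta i j = (if i = j then 1 else 0)"

definition acoef :: "nat \<Rightarrow> (nat \<Rightarrow> nat) \<Rightarrow> nat \<Rightarrow> nat" where
  "acoef n b j = (\<Sum>i\<in>{i::int. 1 \<le> 3 * i + int j \<and> 3 * i + int j \<le> 2 ^ n}. b (nat (3 * i + int j))) mod 2"

definition fixed_seed :: "nat \<Rightarrow> (nat \<Rightarrow> nat) \<Rightarrow> nat \<times> nat" where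
  "fixed_seed n b =
     ((acoef n b 0 + kdelta (n mod 2) 0 * acoef n b 1 + kdelta (n mod 2) 1 * acoef n b 2) mod 2,
      (acoef n b 1 + kdelta (n mod 2) 0 * acoef n b 2 + kdelta (n mod 2) 1 * acoef n b 0) mod 2)"

definition start_vertex :: "nat \<Rightarrow> (nat \<Rightarrow> nat) \<Rightarrow> nat \<times> nat \<Rightarrow> nat list" where
  "start_vertex n b s = map (zval b s) [1..<n + 3]"

definition pre_verts :: "nat \<Rightarrow> (nat \<Rightarrow> nat) \<Rightarrow> nat list set" where
  "pre_verts n b = {x \<in> dB_vert (n + 2). hom_d x \<in> window n b ` {0..<2 ^ n}}"

definition pre_edges :: "nat \<Rightarrow> (nat \<Rightarrow> nat) \<Rightarrow> (nat list \<times> nat list) set" where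
  "pre_edges n b = {(x, y). x \<in> pre_verts n b \<and> y \<in> pre_verts n b \<and> dB_edge x y
                      \<and> (hom_d x, hom_d y) \<in> cyc_edges n b}"

definition list_cyc_edges :: "'a list \<Rightarrow> ('a \<times> 'a) set" where
  "list_cyc_edges C = {(C ! i, C ! ((i + 1) mod length C)) | i. i < length C}"

end

theory Submission
  imports Defs
begin

(* Over GF(2) the recurrence z_(i+2) = b_i + z_(i+1) + z_i, read as a map on
   the pair state (z_(k+1), z_(k+2)), is an affine map whose linear part has order 3.
   Hence after k steps the state is an explicit affine function of the seed, depending only
   on k mod 3 and on the parities of the sums of b over the residue classes mod 3.  Taking
   k = 2^n (which is 1 or 2 mod 3) gives a closed form of D: a bijection of the four seeds
   with D^3 = id and exactly one fixed point, namely fixed_seed.  So D consists of that fixed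
   point and one 3-cycle.
   For the graph part we extend b periodically and let lift s j be the vertex
   z_(j+1) ... z_(j+n+2) of the path started at seed s; it maps to the j-th window of the
   De Bruijn cycle, and lift s (q * 2^n + j) = lift (D^q s) j.  Since a vertex of B_(n+2) is
   determined by its first two letters and its image, the preimage consists exactly of the
   lifts lift s k (s a seed, k < 2^n), and the preimage edges are exactly the lift steps.
   Walking along one D-orbit of length p therefore traces a cycle of length p * 2^n, and the
   two D-orbits give the two cycles of the theorem. *)

lemma bit_cancel:
  assumes "(c + (x::nat)) mod 2 = (c + x') mod 2" "x \<in> {0,1}" "x' \<in> {0,1}"
  shows "x = x'"
proof -
  have "even (c + x) = even (c + x')" using assms(1) by (simp add: even_iff_mod_2_eq_zero)
  then show ?thesis using assms(2,3) by auto
qed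

lemma mod2_eqI: "(even (a::nat) \<longleftrightarrow> even b) \<Longrightarrow> a mod 2 = b mod 2"
  by (metis odd_iff_mod_2_eq_one even_iff_mod_2_eq_zero)

lemma recurrence_sum: "((x::nat) + y + (c + y + x) mod 2) mod 2 = c mod 2"
  by (rule mod2_eqI) auto

text \<open>The residue of the cycle length 2^n modulo 3 selects the shape of D.\<close>
lemma pow2_mod3: "(2::nat) ^ n mod 3 = (if even n then 1 else 2)"
proof (induction n)
  case (Suc n)
  have "(2::nat) ^ Suc n mod 3 = (2 * (2 ^ n mod 3)) mod 3" by (simp add: mod_mult_right_eq)
  then show ?case using Suc by auto
qed simp

section \<open>The recurrence on seeds\<close>

lemma zpair_cong: "(\<And>i. 1 \<le> i \<Longrightarrow> i \<le> k \<Longrightarrow> b i = b' i) \<Longrightarrow> zpair b s k = zpair b' s k"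
  by (induction k) (auto split: prod.splits)

lemma zpair_add: "zpair b s (m + k) = zpair (\<lambda>i. b (i + m)) (zpair b s m) k"
  by (induction k) (auto simp: add_ac split: prod.splits)

lemma zpair_seeds: "s \<in> seeds \<Longrightarrow> zpair b s k \<in> seeds"
  by (induction k) (auto simp: seeds_def split: prod.splits)

text \<open>One step can be undone (z_i is recovered from z_(i+1), z_(i+2)), so k steps are injective.\<close>
lemma zpair_inj:
  "s \<in> seeds \<Longrightarrow> s' \<in> seeds \<Longrightarrow> zpair b s k = zpair b s' k \<Longrightarrow> s = s'"
proof (induction k)
  case (Suc k)
  obtain x y where xy: "zpair b s k = (x, y)" by (cases "zpair b s k")
  obtain x' y' where xy': "zpair b s' k = (x', y')" by (cases "zpair b s' k")
  have "(x, y) \<in> seeds" "(x', y') \<in> seeds" using zpair_seeds Suc.prems xy xy' by metis+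
  moreover have "y = y'" "(b (k + 1) + y + x) mod 2 = (b (k + 1) + y' + x') mod 2"
    using Suc.prems(3) xy xy' by auto
  ultimately have "x = x'" using bit_cancel[of "b (k + 1) + y" x x'] by (auto simp: seeds_def)
  then show ?case using Suc xy xy' \<open>y = y'\<close> by auto
qed simp

lemma zpair_bij: "bij_betw (\<lambda>s. zpair b s k) seeds seeds"
proof -
  have inj: "inj_on (\<lambda>s. zpair b s k) seeds" by (auto intro: inj_onI zpair_inj)
  moreover have "(\<lambda>s. zpair b s k) ` seeds \<subseteq> seeds" using zpair_seeds by blast
  moreover have "finite seeds" by (simp add: seeds_def)
  ultimately show ?thesis by (simp add: bij_betw_def endo_inj_surj)
qed

definition res_sum :: "(nat \<Rightarrow> nat) \<Rightarrow> nat \<Rightarrow> nat \<Rightarrow> nat" where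
  "res_sum b j k = (\<Sum>i = 1..k. if i mod 3 = j then b i else 0)"

lemma res_sum_0 [simp]: "res_sum b j 0 = 0"
  by (simp add: res_sum_def)

lemma res_sum_Suc [simp]:
  "res_sum b j (Suc k) = res_sum b j k + (if Suc k mod 3 = j then b (Suc k) else 0)"
  by (simp add: res_sum_def)

text \<open>Closed form of the recurrence: the state after k steps is an affine function of the
  seed whose linear part is the (k mod 3)-th power of a matrix of order 3.\<close>
lemma zpair_closed:
  assumes "x \<in> {0,1}" "y \<in> {0,1}"
  shows "zpair b (x, y) k =
   (if k mod 3 = 0 then ((x + res_sum b 1 k + res_sum b 2 k) mod 2, (y + res_sum b 2 k + res_sum b 0 k) mod 2)
    else if k mod 3 = 1 then ((y + res_sum b 2 k + res_sum b 0 k) mod 2, (x + y + res_sum b 0 k + res_sum b 1 k) mod 2)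
    else ((x + y + res_sum b 0 k + res_sum b 1 k) mod 2, (x + res_sum b 1 k + res_sum b 2 k) mod 2))"
proof (induction k)
  case 0 then show ?case using assms by auto
next
  case (Suc k)
  consider "k mod 3 = 0" | "k mod 3 = 1" | "k mod 3 = 2" by linarith
  then show ?case
  proof cases
    case 1
    then have "Suc k mod 3 = 1" by (simp add: mod_Suc)
    then show ?thesis using Suc.IH 1 by (auto intro!: mod2_eqI)
  next
    case 2
    then have "Suc k mod 3 = 2" by (simp add: mod_Suc)
    then show ?thesis using Suc.IH 2 by (auto intro!: mod2_eqI)
  next
    case 3
    then have "Suc k mod 3 = 0" by (simp add: mod_Suc)
    then show ?thesis using Suc.IH 3 by (auto intro!: mod2_eqI)
  qed
qed

lemma acoef_res_sum:
  assumes "j < 3"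
  shows "acoef n b j = res_sum b j (2 ^ n) mod 2"
proof -
  let ?I = "{i::int. 1 \<le> 3 * i + int j \<and> 3 * i + int j \<le> 2 ^ n}"
  let ?T = "{t \<in> {1..2 ^ n}. t mod 3 = j}"
  have "(\<Sum>i\<in>?I. b (nat (3 * i + int j))) = (\<Sum>t\<in>?T. b t)"
  proof (rule sum.reindex_bij_witness[where i = "\<lambda>t. int (t div 3)" and j = "\<lambda>i. nat (3 * i + int j)"])
    fix i assume i: "i \<in> ?I"
    then have "i \<ge> 0" using assms by auto
    then obtain m where m: "i = int m" by (metis nonneg_eq_int)
    have "int (3 * m + j) \<le> int (2 ^ n)" using i m by simp
    then have "3 * m + j \<le> 2 ^ n" by (simp only: of_nat_le_iff)
    moreover have "nat (3 * i + int j) = 3 * m + j" using m by (simp add: nat_int_add)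
    ultimately show "int (nat (3 * i + int j) div 3) = i" "nat (3 * i + int j) \<in> ?T"
      using assms i m by auto
  next
    fix t assume t: "t \<in> ?T"
    then have "3 * (t div 3) + j = t" using div_mult_mod_eq[of t 3] by simp
    then have "3 * int (t div 3) + int j = int t" by (metis of_nat_add of_nat_mult of_nat_numeral)
    then show "nat (3 * int (t div 3) + int j) = t" "int (t div 3) \<in> ?I"
      using t by auto
  qed simp
  also have "\<dots> = res_sum b j (2 ^ n)"
    unfolding res_sum_def by (rule sum.inter_filter) simp
  finally show ?thesis by (simp add: acoef_def)
qed

lemma acoef_bit: "acoef n b j \<in> {0,1}"
  unfolding acoef_def by auto

section \<open>The map D on seeds\<close>

text \<open>The affine maps of GF(2)^2 that D turns out to be; e records whether n is even, and
  a0, a1, a2 stand for the coefficients acoef n b 0, 1, 2.\<close>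
definition affine_D :: "bool \<Rightarrow> nat \<Rightarrow> nat \<Rightarrow> nat \<Rightarrow> nat \<times> nat \<Rightarrow> nat \<times> nat" where
  "affine_D e a0 a1 a2 = (\<lambda>(x, y). if e then ((y + a2 + a0) mod 2, (x + y + a0 + a1) mod 2)
      else ((x + y + a0 + a1) mod 2, (x + a1 + a2) mod 2))"

text \<open>The closed form at k = 2^n, which is 1 or 2 modulo 3.\<close>
lemma Dmap_affine:
  assumes "s \<in> seeds"
  shows "Dmap n b s = affine_D (even n) (acoef n b 0) (acoef n b 1) (acoef n b 2) s"
proof -
  obtain x y where xy: "s = (x, y)" "x \<in> {0,1}" "y \<in> {0,1}" using assms by (auto simp: seeds_def)
  show ?thesis
    unfolding Dmap_def xy(1) zpair_closed[OF xy(2,3)] affine_D_def pow2_mod3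
    by (auto simp: acoef_res_sum intro!: mod2_eqI)
qed

lemma affine_D_fixed_iff:
  assumes "x \<in> {0,1}" "y \<in> {0,1}" "a0 \<in> {0,1}" "a1 \<in> {0,1}" "a2 \<in> {0,1}"
  shows "affine_D e a0 a1 a2 (x, y) = (x, y) \<longleftrightarrow>
    (x, y) = (if e then ((a0 + a1) mod 2, (a1 + a2) mod 2) else ((a0 + a2) mod 2, (a1 + a0) mod 2))"
  using assms unfolding affine_D_def by (cases e) auto

lemma affine_D_order3:
  assumes "x \<in> {0,1}" "y \<in> {0,1}" "a0 \<in> {0,1}" "a1 \<in> {0,1}" "a2 \<in> {0,1}"
  shows "affine_D e a0 a1 a2 (affine_D e a0 a1 a2 (affine_D e a0 a1 a2 (x, y))) = (x, y)"
  using assms unfolding affine_D_def by (cases e) auto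

lemma card_seeds: "card seeds = 4"
  by (simp add: seeds_def card_cartesian_product)

lemma fixed_seed_in_seeds: "fixed_seed n b \<in> seeds"
  unfolding fixed_seed_def seeds_def by auto

lemma Dmap_seeds: "s \<in> seeds \<Longrightarrow> Dmap n b s \<in> seeds"
  unfolding Dmap_def by (rule zpair_seeds)

lemma Dmap_bij: "bij_betw (Dmap n b) seeds seeds"
  using zpair_bij[of b "2 ^ n"] unfolding Dmap_def by simp

lemma Dmap_fixed_iff:
  assumes "s \<in> seeds"
  shows "Dmap n b s = s \<longleftrightarrow> s = fixed_seed n b"
proof -
  obtain x y where xy: "s = (x, y)" "x \<in> {0,1}" "y \<in> {0,1}" using assms by (auto simp: seeds_def)
  have "fixed_seed n b = (if even n
      then ((acoef n b 0 + acoef n b 1) mod 2, (acoef n b 1 + acoef n b 2) mod 2)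
      else ((acoef n b 0 + acoef n b 2) mod 2, (acoef n b 1 + acoef n b 0) mod 2))"
    unfolding fixed_seed_def kdelta_def by auto
  then show ?thesis
    using Dmap_affine[OF assms] affine_D_fixed_iff[OF xy(2,3) acoef_bit acoef_bit acoef_bit] xy(1)
    by simp
qed

lemma Dmap_order3: "s \<in> seeds \<Longrightarrow> Dmap n b (Dmap n b (Dmap n b s)) = s"
proof -
  assume s: "s \<in> seeds"
  then obtain x y where xy: "s = (x, y)" "x \<in> {0,1}" "y \<in> {0,1}" by (auto simp: seeds_def)
  show ?thesis
    using Dmap_affine Dmap_seeds s affine_D_order3[OF xy(2,3) acoef_bit acoef_bit acoef_bit] xy(1)
    by metis
qed

lemma three_cycle:
  assumes maps: "g ` S \<subseteq> S" and order3: "\<And>s. s \<in> S \<Longrightarrow> g (g (g s)) = s"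
    and fixed: "\<And>s. s \<in> S \<Longrightarrow> g s = s \<longleftrightarrow> s = f"
    and f: "f \<in> S" and card: "card S = 4"
  obtains s where "s \<in> S" "S - {f} = (\<lambda>q. (g ^^ q) s) ` {..<3}"
    "inj_on (\<lambda>q. (g ^^ q) s) {..<3}" "(g ^^ 3) s = s"
proof -
  have fin: "finite S" using card by (simp add: card_ge_0_finite)
  have card3: "card (S - {f}) = 3" using card f by simp
  then have "S - {f} \<noteq> {}" by (metis card.empty zero_neq_numeral)
  then obtain s where s: "s \<in> S" "s \<noteq> f" by blast
  have gs: "g s \<in> S" "g (g s) \<in> S" using maps s by auto
  have gf: "g f = f" using fixed f by simp
  have "g s \<noteq> s" using fixed s by simp
  moreover have "g (g s) \<noteq> s" using fixed order3 s gs by metis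
  moreover have "g (g s) \<noteq> g s" using fixed order3 s gs gf by metis
  moreover have "g s \<noteq> f" "g (g s) \<noteq> f" using order3 s gf by metis+
  ultimately have "card {s, g s, g (g s)} = 3" "{s, g s, g (g s)} \<subseteq> S - {f}"
    using s gs by auto
  then have others: "{s, g s, g (g s)} = S - {f}"
    using card3 card_subset_eq[of "S - {f}"] fin by simp
  have orbit: "(\<lambda>q. (g ^^ q) s) ` {..<3} = {s, g s, g (g s)}"
    by (auto simp: numeral_3_eq_3 lessThan_Suc numeral_2_eq_2)
  show thesis
  proof
    show "s \<in> S" by (rule s)
    show "S - {f} = (\<lambda>q. (g ^^ q) s) ` {..<3}" using orbit others by simp
    show "inj_on (\<lambda>q. (g ^^ q) s) {..<3}"
      by (rule eq_card_imp_inj_on) (use orbit others card3 in simp_all)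
    show "(g ^^ 3) s = s" using order3 s by (simp add: numeral_3_eq_3)
  qed
qed

text \<open>A vertex of B_(m+2) is determined by its first two letters and its image under hom_d,
  since x_(i+2) is recovered from x_i, x_(i+1) and d(x_i, x_(i+1), x_(i+2)).\<close>
lemma dB_vert_eqI:
  assumes x: "x \<in> dB_vert (m + 2)" and y: "y \<in> dB_vert (m + 2)"
    and first: "x ! 0 = y ! 0" "x ! 1 = y ! 1" and image: "hom_d x = hom_d y"
  shows "x = y"
proof (rule nth_equalityI)
  have len: "length x = m + 2" "length y = m + 2" using x y by (auto simp: dB_vert_def)
  show "length x = length y" using len by simp
  have bits: "x ! i \<in> {0,1}" "y ! i \<in> {0,1}" if "i < m + 2" for i
  proof -
    have "set x \<subseteq> {0,1}" "set y \<subseteq> {0,1}" using x y by (simp_all add: dB_vert_def)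
    moreover have "x ! i \<in> set x" "y ! i \<in> set y" using that len by simp_all
    ultimately show "x ! i \<in> {0,1}" "y ! i \<in> {0,1}" by auto
  qed
  show "x ! i = y ! i" if "i < length x" for i
    using that
  proof (induction i rule: less_induct)
    case (less i)
    show ?case
    proof (cases "i < 2")
      case True
      then show ?thesis using first by (cases i) (auto simp: numeral_2_eq_2 less_Suc_eq)
    next
      case False
      then obtain k where i: "i = k + 2" by (metis add.commute le_Suc_ex not_less)
      then have k: "k < length x - 2" using less.prems by simp
      have "x ! k = y ! k" "x ! (k + 1) = y ! (k + 1)" using less i by simp_all
      moreover have "(x ! k + x ! (k + 1) + x ! i) mod 2 = (y ! k + y ! (k + 1) + y ! i) mod 2"
        using image k len by (simp add: hom_d_def i)
      ultimately have "(x ! k + x ! (k + 1) + x ! i) mod 2 = (x ! k + x ! (k + 1) + y ! i) mod 2"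
        by simp
      then show ?thesis
        by (rule bit_cancel) (use bits less.prems len in simp_all)
    qed
  qed
qed

lemma list_cyc_edges_map:
  assumes "0 < L" "g L = g 0"
  shows "list_cyc_edges (map g [0..<L]) = (\<lambda>i. (g i, g (Suc i))) ` {..<L}"
proof -
  have "g ((i + 1) mod L) = g (Suc i)" if "i < L" for i
    using assms that by (cases "Suc i = L") simp_all
  then show ?thesis unfolding list_cyc_edges_def by force
qed

lemma mixed_radix_image:
  assumes "0 < (N::nat)"
  shows "h ` {..<p * N} = (\<Union>q<p. (\<lambda>k. h (q * N + k)) ` {..<N})"
proof (intro set_eqI iffI)
  fix z assume "z \<in> h ` {..<p * N}"
  then obtain i where i: "i < p * N" "z = h i" by blast
  then have "i div N < p" by (simp add: less_mult_imp_div_less)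
  moreover have "i mod N < N" "h i = h (i div N * N + i mod N)" using assms by simp_all
  ultimately show "z \<in> (\<Union>q<p. (\<lambda>k. h (q * N + k)) ` {..<N})" using i by blast
next
  fix z assume "z \<in> (\<Union>q<p. (\<lambda>k. h (q * N + k)) ` {..<N})"
  then obtain q k where qk: "q < p" "k < N" "z = h (q * N + k)" by blast
  have "q * N + k < Suc q * N" using qk by simp
  also have "\<dots> \<le> p * N" using qk(1) mult_le_mono1[of "Suc q" p N] by simp
  finally show "z \<in> h ` {..<p * N}" using qk by blast
qed

section \<open>The preimage of a De Bruijn cycle\<close>

locale debruijn_cycle =
  fixes n :: nat and b :: "nat \<Rightarrow> nat"
  assumes n_pos: "n \<ge> 1" and is_cycle: "is_dB_cycle n b"
begin

abbreviation N :: nat where "N \<equiv> 2 ^ n"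

definition b_per :: "nat \<Rightarrow> nat" where
  "b_per i = b ((i - 1) mod N + 1)"

lemma b_per_bit: "b_per i \<in> {0,1}"
proof -
  have "(i - 1) mod N + 1 \<in> {1..N}" by (simp add: Suc_leI)
  then show ?thesis using is_cycle unfolding is_dB_cycle_def b_per_def by blast
qed

lemma b_per_eq: "1 \<le> i \<Longrightarrow> i \<le> N \<Longrightarrow> b_per i = b i"
  by (simp add: b_per_def)

lemma b_per_periodic: "1 \<le> i \<Longrightarrow> b_per (i + N) = b_per i"
proof -
  assume "1 \<le> i"
  then have "i + N - 1 = (i - 1) + N" by simp
  then show ?thesis unfolding b_per_def by simp
qed

lemma funpow_Dmap_seeds: "s \<in> seeds \<Longrightarrow> (Dmap n b ^^ q) s \<in> seeds"
  by (induction q) (auto simp: Dmap_seeds)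

lemma zpair_b_per_periods: "zpair b_per s (q * N + k) = zpair b_per ((Dmap n b ^^ q) s) k"
proof (induction q arbitrary: s)
  case (Suc q)
  have "Dmap n b s = zpair b_per s N"
    unfolding Dmap_def by (rule zpair_cong) (simp add: b_per_eq)
  moreover have "zpair b_per s (N + (q * N + k)) = zpair (\<lambda>i. b_per (i + N)) (zpair b_per s N) (q * N + k)"
    by (rule zpair_add)
  moreover have "\<dots> = zpair b_per (zpair b_per s N) (q * N + k)"
    by (rule zpair_cong) (simp add: b_per_periodic)
  ultimately show ?case
    using Suc.IH by (simp add: add.assoc funpow_Suc_right del: funpow.simps)
qed simp

definition lift :: "nat \<times> nat \<Rightarrow> nat \<Rightarrow> nat list" where
  "lift s j = map (\<lambda>t. fst (zpair b_per s (j + t))) [0..<n + 2]"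

lemma length_lift: "length (lift s j) = n + 2"
  by (simp add: lift_def)

lemma lift_nth: "i < n + 2 \<Longrightarrow> lift s j ! i = fst (zpair b_per s (j + i))"
  unfolding lift_def by (simp del: zpair.simps upt_Suc add: nth_map_upt)

lemma lift_first_letters:
  "lift s j ! 0 = fst (zpair b_per s j)" "lift s j ! 1 = snd (zpair b_per s j)"
proof -
  show "lift s j ! 0 = fst (zpair b_per s j)" using lift_nth[of 0 s j] by simp
  obtain x y where "zpair b_per s j = (x, y)" by (cases "zpair b_per s j")
  then show "lift s j ! 1 = snd (zpair b_per s j)" using lift_nth[of 1 s j] by simp
qed

lemma lift_periods: "lift s (q * N + j) = lift ((Dmap n b ^^ q) s) j"
  unfolding lift_def by (simp add: add.assoc zpair_b_per_periods)

lemma start_vertex_lift: "start_vertex n b s = lift s 0"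
proof (rule nth_equalityI)
  show "length (start_vertex n b s) = length (lift s 0)"
    by (simp add: start_vertex_def length_lift)
  fix i assume "i < length (start_vertex n b s)"
  then have i: "i < n + 2" by (simp add: start_vertex_def)
  have "n + 1 \<le> N" using less_exp[of n] by (simp add: Suc_leI)
  then have "zpair b s i = zpair b_per s i" by (intro zpair_cong) (use i in \<open>simp add: b_per_eq\<close>)
  then show "start_vertex n b s ! i = lift s 0 ! i"
    using i by (simp del: zpair.simps upt_Suc add: start_vertex_def nth_map_upt lift_nth zval_def)
qed

lemma window_mod: "window n b (j mod N) = window n b j"
  unfolding window_def by (simp add: mod_add_left_eq)

text \<open>The lift of position j maps to the j-th window: d(z_i, z_(i+1), z_(i+2)) = b_i.\<close>
lemma hom_d_lift: "hom_d (lift s j) = window n b j"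
proof (rule nth_equalityI)
  show "length (hom_d (lift s j)) = length (window n b j)"
    by (simp add: hom_d_def length_lift window_def)
  fix i assume "i < length (hom_d (lift s j))"
  then have i: "i < n" by (simp add: hom_d_def length_lift)
  obtain x y where xy: "zpair b_per s (j + i) = (x, y)" by (cases "zpair b_per s (j + i)")
  have "lift s j ! i = x" "lift s j ! (i + 1) = y"
    "lift s j ! (i + 2) = (b_per (Suc (j + i)) + y + x) mod 2"
    using i xy by (simp_all add: lift_nth)
  then have "hom_d (lift s j) ! i = (x + y + (b_per (Suc (j + i)) + y + x) mod 2) mod 2"
    using i by (simp add: hom_d_def length_lift)
  also have "\<dots> = b_per (Suc (j + i))"
    using b_per_bit[of "Suc (j + i)"] by (auto simp: recurrence_sum)
  also have "\<dots> = window n b j ! i" using i by (simp add: window_def b_per_def)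
  finally show "hom_d (lift s j) ! i = window n b j ! i" .
qed

lemma lift_dB_vert: "s \<in> seeds \<Longrightarrow> lift s j \<in> dB_vert (n + 2)"
proof -
  assume s: "s \<in> seeds"
  have "fst (zpair b_per s k) \<in> {0,1}" for k
    using zpair_seeds[OF s, of b_per k] by (cases "zpair b_per s k") (auto simp: seeds_def)
  then show ?thesis
    by (simp add: dB_vert_def lift_def image_subset_iff del: zpair.simps upt_Suc)
qed

lemma lift_dB_edge: "dB_edge (lift s j) (lift s (Suc j))"
  unfolding dB_edge_def
  by (auto simp: length_lift lift_nth nth_tl nth_butlast simp del: zpair.simps intro!: nth_equalityI)

lemma lift_pre_vert: "s \<in> seeds \<Longrightarrow> lift s j \<in> pre_verts n b"
proof -
  assume "s \<in> seeds"
  moreover have "hom_d (lift s j) = window n b (j mod N)" "j mod N \<in> {0..<N}"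
    by (simp_all add: hom_d_lift window_mod)
  ultimately show ?thesis unfolding pre_verts_def using lift_dB_vert by blast
qed

lemma lift_pre_edge: "s \<in> seeds \<Longrightarrow> (lift s j, lift s (Suc j)) \<in> pre_edges n b"
proof -
  assume s: "s \<in> seeds"
  have "(window n b (j mod N), window n b (Suc (j mod N))) \<in> cyc_edges n b"
    unfolding cyc_edges_def by auto
  moreover have "window n b (Suc (j mod N)) = window n b (Suc j)"
    by (metis mod_Suc_eq window_mod)
  ultimately have "(hom_d (lift s j), hom_d (lift s (Suc j))) \<in> cyc_edges n b"
    by (simp add: hom_d_lift window_mod)
  then show ?thesis unfolding pre_edges_def using lift_pre_vert[OF s] lift_dB_edge by auto
qed

text \<open>Lifts of positions below N are pairwise distinct: the window determines the position,
  and the first two letters then determine the seed.\<close>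
lemma lift_inj:
  assumes "s \<in> seeds" "t \<in> seeds" "j < N" "k < N" "lift s j = lift t k"
  shows "j = k \<and> s = t"
proof
  have "inj_on (window n b) {0..<N}" using is_cycle by (simp add: is_dB_cycle_def)
  moreover have "window n b j = window n b k" using assms(5) hom_d_lift by metis
  ultimately show "j = k" using assms(3,4) by (simp add: inj_on_eq_iff)
  then have "zpair b_per s j = zpair b_per t j" using assms(5) lift_first_letters by (metis prod_eqI)
  then show "s = t" using zpair_inj assms(1,2) by blast
qed

lemma pre_vert_is_lift:
  assumes "x \<in> pre_verts n b"
  obtains s k where "s \<in> seeds" "k < N" "x = lift s k"
proof -
  have x: "x \<in> dB_vert (n + 2)" and "hom_d x \<in> window n b ` {0..<N}"
    using assms by (auto simp: pre_verts_def)
  then obtain k where k: "k < N" "hom_d x = window n b k" by auto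
  have "set x \<subseteq> {0,1}" using x by (simp add: dB_vert_def)
  moreover have "x ! 0 \<in> set x" "x ! 1 \<in> set x" using x by (simp_all add: dB_vert_def)
  ultimately have "(x ! 0, x ! 1) \<in> seeds" unfolding seeds_def by auto
  moreover have "(\<lambda>s. zpair b_per s k) ` seeds = seeds" using zpair_bij by (simp add: bij_betw_def)
  ultimately obtain s where s: "s \<in> seeds" "zpair b_per s k = (x ! 0, x ! 1)"
    by (metis (no_types, lifting) imageE)
  have "lift s k = x"
    by (rule dB_vert_eqI[OF lift_dB_vert[OF s(1)] x])
      (use s(2) k lift_first_letters hom_d_lift in simp_all)
  with s k that show thesis by blast
qed

text \<open>An edge of the preimage is determined by its tail: both heads share their first two
  letters (the last two of the tail) and their image (the successor window).\<close>
lemma pre_edges_functional: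
  assumes "(x, y) \<in> pre_edges n b" "(x, y') \<in> pre_edges n b"
  shows "y = y'"
proof -
  have y: "y \<in> dB_vert (n + 2)" "y' \<in> dB_vert (n + 2)" and e: "dB_edge x y" "dB_edge x y'"
    and c: "(hom_d x, hom_d y) \<in> cyc_edges n b" "(hom_d x, hom_d y') \<in> cyc_edges n b"
    using assms by (auto simp: pre_edges_def pre_verts_def)
  obtain k k' where k: "k < N" "k' < N" "hom_d x = window n b k" "hom_d y = window n b (Suc k)"
    "hom_d x = window n b k'" "hom_d y' = window n b (Suc k')"
    using c unfolding cyc_edges_def by auto
  have "inj_on (window n b) {0..<N}" using is_cycle by (simp add: is_dB_cycle_def)
  then have "k = k'" using k by (simp add: inj_on_eq_iff)
  then have image: "hom_d y = hom_d y'" using k by simp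
  have len: "length y = n + 2" "length y' = n + 2" using y by (auto simp: dB_vert_def)
  have "butlast y = butlast y'" using e unfolding dB_edge_def by simp
  then have "y ! i = y' ! i" if "i < 2" for i
    using that len n_pos nth_butlast[of i y] nth_butlast[of i y'] by simp
  then show ?thesis by (intro dB_vert_eqI[OF y _ _ image]) simp_all
qed

lemma pre_verts_lifts: "pre_verts n b = (\<Union>s\<in>seeds. lift s ` {..<N})"
proof (intro set_eqI iffI)
  fix x assume "x \<in> pre_verts n b"
  then obtain s k where "s \<in> seeds" "k < N" "x = lift s k" by (rule pre_vert_is_lift)
  then show "x \<in> (\<Union>s\<in>seeds. lift s ` {..<N})" by blast
qed (auto intro: lift_pre_vert)

definition lift_steps :: "nat \<times> nat \<Rightarrow> (nat list \<times> nat list) set" where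
  "lift_steps t = (\<lambda>k. (lift t k, lift t (Suc k))) ` {..<N}"

lemma pre_edges_lifts: "pre_edges n b = (\<Union>s\<in>seeds. lift_steps s)"
proof (intro set_eqI iffI)
  fix e assume e: "e \<in> pre_edges n b"
  obtain x y where xy: "e = (x, y)" by (cases e)
  then have "x \<in> pre_verts n b" using e by (simp add: pre_edges_def)
  then obtain s k where sk: "s \<in> seeds" "k < N" "x = lift s k" by (rule pre_vert_is_lift)
  then have "y = lift s (Suc k)" using pre_edges_functional lift_pre_edge e xy by blast
  then show "e \<in> (\<Union>s\<in>seeds. lift_steps s)" using sk xy by (auto simp: lift_steps_def)
qed (auto simp: lift_steps_def intro: lift_pre_edge)

section \<open>Cycles from D-orbits\<close>

definition orbit :: "nat \<times> nat \<Rightarrow> nat \<Rightarrow> (nat \<times> nat) set" where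
  "orbit s p = (\<lambda>q. (Dmap n b ^^ q) s) ` {..<p}"

text \<open>The path of length p * N from seed s: it runs through the lifts of the first p seeds
  of the D-orbit of s.\<close>
definition orbit_path :: "nat \<times> nat \<Rightarrow> nat \<Rightarrow> nat list list" where
  "orbit_path s p = map (lift s) [0..<p * N]"

lemma orbit_seeds: "s \<in> seeds \<Longrightarrow> orbit s p \<subseteq> seeds"
  by (auto simp: orbit_def funpow_Dmap_seeds)

lemma set_orbit_path: "set (orbit_path s p) = (\<Union>t\<in>orbit s p. lift t ` {..<N})"
proof -
  have "set (orbit_path s p) = lift s ` {..<p * N}" by (auto simp: orbit_path_def)
  also have "\<dots> = (\<Union>q<p. (\<lambda>k. lift s (q * N + k)) ` {..<N})" by (simp add: mixed_radix_image)
  finally show ?thesis by (simp add: lift_periods orbit_def)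
qed

lemma orbit_path_distinct:
  assumes "s \<in> seeds" and inj: "inj_on (\<lambda>q. (Dmap n b ^^ q) s) {..<p}"
  shows "distinct (orbit_path s p)"
proof -
  have "i = j" if "i < p * N" "j < p * N" "lift s i = lift s j" for i j
  proof -
    have q: "i div N < p" "j div N < p" using that by (simp_all add: less_mult_imp_div_less)
    have "lift ((Dmap n b ^^ (i div N)) s) (i mod N) = lift ((Dmap n b ^^ (j div N)) s) (j mod N)"
      using that(3) lift_periods by (metis div_mult_mod_eq)
    moreover have "i mod N < N" "j mod N < N" by simp_all
    ultimately have "i mod N = j mod N" "(Dmap n b ^^ (i div N)) s = (Dmap n b ^^ (j div N)) s"
      using lift_inj funpow_Dmap_seeds assms(1) by blast+
    moreover have "i div N = j div N" using inj_onD[OF inj calculation(2)] q by simp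
    ultimately show "i = j" by (metis div_mult_mod_eq)
  qed
  then show ?thesis unfolding orbit_path_def by (auto simp: distinct_map inj_on_def)
qed

lemma orbit_path_edges:
  assumes "0 < p" "(Dmap n b ^^ p) s = s"
  shows "list_cyc_edges (orbit_path s p) = (\<Union>t\<in>orbit s p. lift_steps t)"
proof -
  have "lift s (p * N) = lift s 0" using lift_periods[of s p 0] assms by simp
  then have "list_cyc_edges (orbit_path s p) = (\<lambda>i. (lift s i, lift s (Suc i))) ` {..<p * N}"
    unfolding orbit_path_def using assms by (intro list_cyc_edges_map) simp_all
  also have "\<dots> = (\<Union>q<p. (\<lambda>k. (lift s (q * N + k), lift s (Suc (q * N + k)))) ` {..<N})"
    by (rule mixed_radix_image) simp
  also have "\<dots> = (\<Union>q<p. (\<lambda>k. (lift s (q * N + k), lift s (q * N + Suc k))) ` {..<N})"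
    by simp
  finally show ?thesis by (simp only: lift_periods) (simp add: orbit_def lift_steps_def)
qed

lemma orbit_paths_disjoint:
  assumes "s \<in> seeds" "t \<in> seeds" "orbit s p \<inter> orbit t r = {}"
  shows "set (orbit_path s p) \<inter> set (orbit_path t r) = {}"
proof -
  have "lift u k \<noteq> lift v k'" if "u \<in> orbit s p" "v \<in> orbit t r" "k < N" "k' < N" for u v k k'
  proof -
    have "u \<in> seeds" "v \<in> seeds" using that(1,2) assms(1,2) orbit_seeds by (meson subsetD)+
    moreover have "u \<noteq> v" using that(1,2) assms(3) by auto
    ultimately show ?thesis using lift_inj[of u v k k'] that(3,4) by auto
  qed
  then show ?thesis by (auto simp: set_orbit_path)
qed

end

theorem mainTheorem5:
  fixes n :: nat and b :: "nat \<Rightarrow> nat"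
  assumes "n \<ge> 1" and "is_dB_cycle n b"
  shows "bij_betw (Dmap n b) seeds seeds
    \<and> {s \<in> seeds. Dmap n b s = s} = {fixed_seed n b}
    \<and> (\<exists>C1 C2. distinct C1 \<and> distinct C2
          \<and> length C1 = 2 ^ n \<and> length C2 = 3 * 2 ^ n
          \<and> set C1 \<inter> set C2 = {}
          \<and> hd C1 = start_vertex n b (fixed_seed n b)
          \<and> (\<forall>s \<in> seeds - {fixed_seed n b}. start_vertex n b s \<in> set C2)
          \<and> pre_verts n b = set C1 \<union> set C2
          \<and> pre_edges n b = list_cyc_edges C1 \<union> list_cyc_edges C2)"
proof -
  interpret debruijn_cycle n b using assms by unfold_locales
  let ?f = "fixed_seed n b"
  have f: "?f \<in> seeds" "Dmap n b ?f = ?f" using fixed_seed_in_seeds Dmap_fixed_iff by blast+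
  obtain s where s: "s \<in> seeds" and others: "seeds - {?f} = orbit s 3"
    and inj: "inj_on (\<lambda>q. (Dmap n b ^^ q) s) {..<3}" and period: "(Dmap n b ^^ 3) s = s"
    using three_cycle[of "Dmap n b" seeds ?f] Dmap_seeds Dmap_order3 Dmap_fixed_iff f card_seeds
    unfolding orbit_def by blast
  have orbit_f: "orbit ?f 1 = {?f}"
    unfolding orbit_def by (simp only: One_nat_def lessThan_Suc lessThan_0 image_insert image_empty funpow_0)
  have seeds_split: "seeds = orbit ?f 1 \<union> orbit s 3"
    unfolding orbit_f others[symmetric] using f(1) by blast
  define C1 C2 where "C1 = orbit_path ?f 1" and "C2 = orbit_path s 3"
  have "distinct C1"
    unfolding C1_def by (rule orbit_path_distinct[OF f(1)]) (auto simp: inj_on_def)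
  moreover have "distinct C2"
    unfolding C2_def by (rule orbit_path_distinct[OF s inj])
  moreover have "set C1 \<inter> set C2 = {}"
    unfolding C1_def C2_def
    by (rule orbit_paths_disjoint[OF f(1) s]) (unfold orbit_f others[symmetric], blast)
  moreover have "hd C1 = start_vertex n b ?f"
    by (simp add: C1_def orbit_path_def start_vertex_lift upt_conv_Cons)
  moreover have "start_vertex n b t \<in> set C2" if "t \<in> seeds - {?f}" for t
  proof -
    have "lift t 0 \<in> lift t ` {..<N}" by simp
    then show ?thesis
      using that unfolding C2_def set_orbit_path others[symmetric] start_vertex_lift by blast
  qed
  moreover have "pre_verts n b = set C1 \<union> set C2"
    unfolding C1_def C2_def pre_verts_lifts set_orbit_path by (subst seeds_split) simp
  moreover have "pre_edges n b = list_cyc_edges C1 \<union> list_cyc_edges C2"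
    unfolding C1_def C2_def pre_edges_lifts using f period
    by (subst seeds_split) (simp add: orbit_path_edges)
  moreover have "{t \<in> seeds. Dmap n b t = t} = {?f}" using Dmap_fixed_iff f by blast
  moreover have "length C1 = 2 ^ n" "length C2 = 3 * 2 ^ n"
    by (simp_all add: C1_def C2_def orbit_path_def)
  ultimately show ?thesis using Dmap_bij by blast
qed

end
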